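(* Let $F=F(N,\mathcal D)$ be a connected GSC and let $x$ be a local cut point of $F$. For $n\ge1$ let $E'_n(x)=\bigcup_{\mathbf i\in\Omega_n(x)}\varphi_{\mathbf i}(F)$. Then there exists $m\ge1$ such that $x$ is a cut point of $E'_m(x)$.
   Context: GSC: $N\ge2$, $\mathcal D\subset\{0,\dots,N-1\}^2$ with $1<|\mathcal D|<N^2$, $\varphi_i(x)=\frac1N(x+i)$, $F$ the attractor $F=\bigcup_{i\in\mathcal D}\varphi_i(F)$; $\varphi_{i_1\cdots i_k}=\varphi_{i_1}\circ\cdots\circ\varphi_{i_k}$. $\Omega_n(x)=\{\mathbf i\in\mathcal D^n: x\in\varphi_{\mathbf i}(F)\}$. A local cut point of $F$ is a point that is a cut point (removal disconnects) of some connected neighborhood of itself in $F$. *)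

theory Defs
  imports "HOL-Analysis.Analysis"
begin

definition gsc_map :: "nat \<Rightarrow> nat \<times> nat \<Rightarrow> real \<times> real \<Rightarrow> real \<times> real" where
  "gsc_map N i x = (1 / real N) *\<^sub>R (x + (real (fst i), real (snd i)))"

text \<open>phi_{i1...ik} = phi_{i1} o ... o phi_{ik} for the word [i1,...,ik].\<close>
definition gsc_word_map :: "nat \<Rightarrow> (nat \<times> nat) list \<Rightarrow> real \<times> real \<Rightarrow> real \<times> real" where
  "gsc_word_map N w = foldr (\<lambda>i f. gsc_map N i \<circ> f) w id"

definition gsc_Omega ::
  "nat \<Rightarrow> (nat \<times> nat) set \<Rightarrow> (real \<times> real) set \<Rightarrow> nat \<Rightarrow> real \<times> real \<Rightarrow> (nat \<times> nat) list set" where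
  "gsc_Omega N D F n x = {w. length w = n \<and> set w \<subseteq> D \<and> x \<in> gsc_word_map N w ` F}"

definition gsc_E' ::
  "nat \<Rightarrow> (nat \<times> nat) set \<Rightarrow> (real \<times> real) set \<Rightarrow> nat \<Rightarrow> real \<times> real \<Rightarrow> (real \<times> real) set" where
  "gsc_E' N D F n x = (\<Union>w\<in>gsc_Omega N D F n x. gsc_word_map N w ` F)"

definition cut_point :: "'a::topological_space set \<Rightarrow> 'a \<Rightarrow> bool" where
  "cut_point A x \<longleftrightarrow> x \<in> A \<and> \<not> connected (A - {x})"

definition local_cut_point :: "'a::topological_space set \<Rightarrow> 'a \<Rightarrow> bool" where
  "local_cut_point F x \<longleftrightarrow>
     (\<exists>U. U \<subseteq> F \<and> connected U \<and>
          (\<exists>V. openin (top_of_set F) V \<and> x \<in> V \<and> V \<subseteq> U) \<and> cut_point U x)"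

end

theory Submission
  imports Defs
begin

text \<open>
  Let \<open>U\<close> be a connected neighbourhood of \<open>x\<close> in \<open>F\<close> of which \<open>x\<close> is a cut point.
  Level-\<open>m\<close> cells have diameter \<open>diam F / N\<^sup>m\<close>, so for large \<open>m\<close> the union \<open>E'\<^sub>m(x)\<close> of
  the cells containing \<open>x\<close> lies inside \<open>U\<close>; and \<open>E'\<^sub>m(x)\<close> is a neighbourhood of \<open>x\<close> in \<open>F\<close>,
  because the finitely many compact cells missing \<open>x\<close> stay away from \<open>x\<close>.  A component of
  \<open>U - {x}\<close> cut off from \<open>E'\<^sub>m(x) - {x}\<close> would avoid a neighbourhood of \<open>x\<close> and hence be
  clopen in the connected set \<open>U\<close>, which is impossible.
\<close>

lemma clopen_in_punctured_connected_eq_empty: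
  fixes U :: "'a::t1_space set"
  assumes "connected U" "x \<in> U"
    and "openin (top_of_set (U - {x})) B" "closedin (top_of_set (U - {x})) B"
    and "open G" "x \<in> G" "B \<inter> G = {}"
  shows "B = {}"
proof -
  have "openin (top_of_set U) B"
    using assms(3) openin_trans openin_delete[OF openin_subtopology_self] by blast
  moreover have "closedin (top_of_set U) B"
  proof -
    obtain C where "closed C" "B = (U - {x}) \<inter> C"
      using assms(4) closedin_closed by blast
    then have "B = U \<inter> (C - G)" and "closed (C - G)"
      using assms(5-7) by auto
    then show ?thesis
      using closedin_closed by blast
  qed
  ultimately have "B = {} \<or> B = U"
    using assms(1) connected_clopen by blast
  moreover have "x \<notin> B"
    using openin_subset[OF assms(3)] by auto
  ultimately show ?thesis
    using assms(2) by blast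
qed

lemma cut_point_of_neighbourhood:
  fixes U E :: "'a::t1_space set"
  assumes "connected U" "cut_point U x" "E \<subseteq> U" "x \<in> E"
    and "open G" "x \<in> G" "U \<inter> G \<subseteq> E"
  shows "cut_point E x"
  unfolding cut_point_def
proof (intro conjI notI \<open>x \<in> E\<close>)
  assume connected: "connected (E - {x})"
  obtain T where T: "openin (top_of_set (U - {x})) T" "closedin (top_of_set (U - {x})) T"
      "T \<noteq> {}" "T \<noteq> U - {x}"
    using assms(2) unfolding cut_point_def connected_clopen by blast
  have TU: "T \<subseteq> U - {x}"
    using openin_subset[OF T(1)] by simp
  have "connectedin (top_of_set (U - {x})) (E - {x})"
    using connected assms(3) by (auto simp: connectedin_subtopology)
  then have "E - {x} \<subseteq> T \<or> disjnt (E - {x}) T"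
    using T(1,2) connectedin_clopen_cases by blast
  then obtain B where B: "openin (top_of_set (U - {x})) B" "closedin (top_of_set (U - {x})) B"
      "B \<noteq> {}" "B \<subseteq> U - {x}" "B \<inter> E = {}"
  proof
    assume "E - {x} \<subseteq> T"
    then have "(U - {x} - T) \<inter> E = {}"
      by blast
    moreover have "U - {x} - T \<noteq> {}"
      using T(4) TU by blast
    moreover have "openin (top_of_set (U - {x})) (U - {x} - T)"
      using T(2) by (simp add: openin_diff)
    moreover have "closedin (top_of_set (U - {x})) (U - {x} - T)"
      using T(1) by (simp add: closedin_diff)
    ultimately show thesis
      using that[of "U - {x} - T"] by blast
  next
    assume "disjnt (E - {x}) T"
    then have "T \<inter> E = {}"
      using TU by (auto simp: disjnt_def)
    then show thesis
      using that[of T] T(1-3) TU by blast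
  qed
  have "B \<inter> G = {}"
    using B(4,5) assms(7) by blast
  then have "B = {}"
    using clopen_in_punctured_connected_eq_empty[OF assms(1) _ B(1,2) assms(5,6)] assms(3,4)
    by blast
  then show False
    using B(3) by contradiction
qed

lemma finite_closed_cover_neighbourhood:
  fixes K :: "'i \<Rightarrow> 'a::topological_space set"
  assumes "finite I" "\<And>i. i \<in> I \<Longrightarrow> closed (K i)" "S \<subseteq> (\<Union>i\<in>I. K i)"
  obtains G where "open G" "x \<in> G" "S \<inter> G \<subseteq> (\<Union>i\<in>{i \<in> I. x \<in> K i}. K i)"
proof
  show "open (- (\<Union>i\<in>{i \<in> I. x \<notin> K i}. K i))"
    using assms(1,2) by (intro open_Compl closed_UN) auto
next
  show "S \<inter> - (\<Union>i\<in>{i \<in> I. x \<notin> K i}. K i) \<subseteq> (\<Union>i\<in>{i \<in> I. x \<in> K i}. K i)"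
    using assms(3) by blast
qed simp

definition gsc_words :: "(nat \<times> nat) set \<Rightarrow> nat \<Rightarrow> (nat \<times> nat) list set" where
  "gsc_words D n = {w. length w = n \<and> set w \<subseteq> D}"

lemma finite_gsc_words: "finite D \<Longrightarrow> finite (gsc_words D n)"
  using finite_lists_length_eq[of D n] by (simp add: gsc_words_def conj_commute)

lemma gsc_Omega_eq: "gsc_Omega N D F n x = {w \<in> gsc_words D n. x \<in> gsc_word_map N w ` F}"
  by (auto simp: gsc_Omega_def gsc_words_def)

lemma gsc_word_map_Nil [simp]: "gsc_word_map N [] = id"
  by (simp add: gsc_word_map_def)

lemma gsc_word_map_Cons [simp]: "gsc_word_map N (i # w) = gsc_map N i \<circ> gsc_word_map N w"
  by (simp add: gsc_word_map_def)

lemma dist_gsc_map: "dist (gsc_map N i a) (gsc_map N i b) = dist a b / real N"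
proof -
  have "gsc_map N i a - gsc_map N i b = (1 / real N) *\<^sub>R (a - b)"
    unfolding gsc_map_def by (simp add: algebra_simps)
  then show ?thesis
    by (simp add: dist_norm divide_inverse mult.commute)
qed

lemma dist_gsc_word_map:
  "dist (gsc_word_map N w a) (gsc_word_map N w b) = dist a b / real N ^ length w"
  by (induction w) (simp_all add: dist_gsc_map)

lemma continuous_on_gsc_word_map: "continuous_on S (gsc_word_map N w)"
proof (induction w)
  case (Cons i w)
  have "continuous_on UNIV (gsc_map N i)"
    unfolding gsc_map_def by (intro continuous_intros)
  from continuous_on_compose2[OF this Cons.IH subset_UNIV] show ?case
    by (simp add: o_def)
qed simp

lemma gsc_word_map_image_subset:
  assumes "F = (\<Union>i\<in>D. gsc_map N i ` F)" "set w \<subseteq> D"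
  shows "gsc_word_map N w ` F \<subseteq> F"
  using assms(2)
proof (induction w)
  case (Cons i w)
  then have "gsc_word_map N (i # w) ` F \<subseteq> gsc_map N i ` F"
    by (auto simp: image_comp[symmetric])
  also have "\<dots> \<subseteq> F"
    using Cons.prems assms(1) by auto
  finally show ?case .
qed simp

lemma self_similar_eq_level_cells:
  assumes "F = (\<Union>i\<in>D. gsc_map N i ` F)"
  shows "F = (\<Union>w\<in>gsc_words D n. gsc_word_map N w ` F)"
proof
  show "F \<subseteq> (\<Union>w\<in>gsc_words D n. gsc_word_map N w ` F)"
  proof (induction n)
    case 0
    show ?case by (simp add: gsc_words_def)
  next
    case (Suc n)
    show ?case
    proof
      fix y assume "y \<in> F"
      then obtain i z where "i \<in> D" "z \<in> F" "y = gsc_map N i z"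
        using assms by blast
      moreover obtain w u where "w \<in> gsc_words D n" "u \<in> F" "z = gsc_word_map N w u"
        using Suc.IH \<open>z \<in> F\<close> by blast
      ultimately have "i # w \<in> gsc_words D (Suc n)" "y = gsc_word_map N (i # w) u"
        by (auto simp: gsc_words_def)
      with \<open>u \<in> F\<close> show "y \<in> (\<Union>w\<in>gsc_words D (Suc n). gsc_word_map N w ` F)"
        by blast
    qed
  qed
  show "(\<Union>w\<in>gsc_words D n. gsc_word_map N w ` F) \<subseteq> F"
    using gsc_word_map_image_subset[OF assms] by (auto simp: gsc_words_def)
qed

lemma gsc_E'_eq:
  "gsc_E' N D F n x = (\<Union>w\<in>{w \<in> gsc_words D n. x \<in> gsc_word_map N w ` F}. gsc_word_map N w ` F)"
  by (simp add: gsc_E'_def gsc_Omega_eq)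

lemma mem_gsc_E':
  assumes "F = (\<Union>i\<in>D. gsc_map N i ` F)" "x \<in> F"
  shows "x \<in> gsc_E' N D F n x"
  using subsetD[OF equalityD1[OF self_similar_eq_level_cells[OF assms(1), where n = n]] assms(2)]
  by (auto simp: gsc_E'_eq)

lemma gsc_E'_subset_cball:
  assumes "bounded F" "F = (\<Union>i\<in>D. gsc_map N i ` F)"
  shows "gsc_E' N D F n x \<subseteq> F \<inter> cball x (diameter F / real N ^ n)"
proof
  fix y assume "y \<in> gsc_E' N D F n x"
  then obtain w a b where w: "w \<in> gsc_words D n" "a \<in> F" "b \<in> F"
      and xy: "x = gsc_word_map N w a" "y = gsc_word_map N w b"
    by (auto simp: gsc_E'_eq)
  have "dist x y = dist a b / real N ^ n"
    using xy w(1) dist_gsc_word_map by (simp add: gsc_words_def)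
  also have "\<dots> \<le> diameter F / real N ^ n"
    using w(2,3) assms(1) by (intro divide_right_mono diameter_bounded_bound) auto
  finally have "y \<in> cball x (diameter F / real N ^ n)"
    by simp
  moreover have "y \<in> F"
    using w xy gsc_word_map_image_subset[OF assms(2)] by (auto simp: gsc_words_def)
  ultimately show "y \<in> F \<inter> cball x (diameter F / real N ^ n)"
    by blast
qed

lemma gsc_E'_neighbourhood:
  assumes "finite D" "compact F" "F = (\<Union>i\<in>D. gsc_map N i ` F)"
  obtains G where "open G" "x \<in> G" "F \<inter> G \<subseteq> gsc_E' N D F n x"
proof -
  have "closed (gsc_word_map N w ` F)" for w
    using assms(2) continuous_on_gsc_word_map
    by (intro compact_imp_closed compact_continuous_image)
  then obtain G where "open G" "x \<in> G"
      "F \<inter> G \<subseteq> (\<Union>w\<in>{w \<in> gsc_words D n. x \<in> gsc_word_map N w ` F}. gsc_word_map N w ` F)"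
    by (rule finite_closed_cover_neighbourhood[OF finite_gsc_words[OF assms(1)] _
        equalityD1[OF self_similar_eq_level_cells[OF assms(3), where n = n]]])
  then show thesis
    using that by (simp add: gsc_E'_eq)
qed

lemma gsc_E'_subset_neighbourhood:
  assumes "N \<ge> 2" "bounded F" "F = (\<Union>i\<in>D. gsc_map N i ` F)"
    and "openin (top_of_set F) V" "x \<in> V"
  obtains m where "m \<ge> 1" "gsc_E' N D F m x \<subseteq> V"
proof -
  obtain \<epsilon> where "\<epsilon> > 0" and ball_V: "F \<inter> ball x \<epsilon> \<subseteq> V"
    using assms(4,5) unfolding openin_contains_ball by blast
  obtain k where "diameter F / \<epsilon> < real N ^ k"
    using real_arch_pow[of "real N"] assms(1) by auto
  also have "\<dots> \<le> real N ^ Suc k"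
    using assms(1) by (intro power_increasing) auto
  finally have "diameter F / real N ^ Suc k < \<epsilon>"
    using \<open>\<epsilon> > 0\<close> assms(1) by (simp add: field_simps)
  then have "F \<inter> cball x (diameter F / real N ^ Suc k) \<subseteq> V"
    using ball_V by auto
  with gsc_E'_subset_cball[OF assms(2,3), of "Suc k" x] show thesis
    by (intro that[of "Suc k"]) auto
qed

theorem mainTheorem19:
  fixes N :: nat and D :: "(nat \<times> nat) set" and F :: "(real \<times> real) set" and x :: "real \<times> real"
  assumes "N \<ge> 2"
    and "D \<subseteq> {0..<N} \<times> {0..<N}"
    and "1 < card D" and "card D < N\<^sup>2"
    and "compact F" and "F \<noteq> {}"
    and "F = (\<Union>i\<in>D. gsc_map N i ` F)"
    and "connected F"
    and "local_cut_point F x"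
  shows "\<exists>m\<ge>1. cut_point (gsc_E' N D F m x) x"
proof -
  obtain U V where U: "U \<subseteq> F" "connected U" "cut_point U x"
      and V: "openin (top_of_set F) V" "x \<in> V" "V \<subseteq> U"
    using assms(9) unfolding local_cut_point_def by blast
  obtain m where "m \<ge> 1" and "gsc_E' N D F m x \<subseteq> V"
    using gsc_E'_subset_neighbourhood[OF assms(1) compact_imp_bounded[OF assms(5)] assms(7) V(1,2)] .
  define E where "E = gsc_E' N D F m x"
  have "E \<subseteq> U"
    using \<open>gsc_E' N D F m x \<subseteq> V\<close> V(3) unfolding E_def by blast
  have "x \<in> E"
    unfolding E_def using U(1) V(2,3) by (intro mem_gsc_E'[OF assms(7)]) blast
  have "finite D"
    using assms(2) by (rule finite_subset) simp
  then obtain G where "open G" "x \<in> G" "F \<inter> G \<subseteq> E"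
    unfolding E_def by (rule gsc_E'_neighbourhood[OF _ assms(5,7)])
  then have "U \<inter> G \<subseteq> E"
    using U(1) by blast
  with \<open>E \<subseteq> U\<close> \<open>x \<in> E\<close> \<open>open G\<close> \<open>x \<in> G\<close> have "cut_point E x"
    by (intro cut_point_of_neighbourhood[OF U(2,3)])
  then show ?thesis
    using \<open>m \<ge> 1\<close> unfolding E_def by blast
qed

end
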